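(* Let $X$ be a random variable with distribution $P$ on $\mathbb{Z}_+=\{0,1,2,\dots\}$ and mean $E(X)=\lambda>0$. Suppose that either $P(k)>0$ for all $k\in\mathbb{Z}_+$, or there is $N\in\mathbb{Z}_+$ with $P(k)=0$ for all $k>N$. Then $$D(P\,\|\,\mathrm{Po}(\lambda))\le K(X).$$
   Context: For a random variable $X$ with distribution $P$ on $\mathbb{Z}_+$ and mean $\lambda>0$, the scaled score function is $\rho_X(x)=\frac{(x+1)P(x+1)}{\lambda P(x)}-1$ and the scaled Fisher information is $K(X)=\lambda E[\rho_X(X)^2]$, i.e. $K(X)=\lambda\sum_{x\ge0}\frac{\big(\frac{(x+1)P(x+1)}{\lambda}-P(x)\big)^2}{P(x)}$, with the conventions $0/0=0$ and $c/0=\infty$ for $c>0$. $\mathrm{Po}(\lambda)$ is the Poisson distribution with mean $\lambda$, and $D(P\|Q)=\sum_x P(x)\log\frac{P(x)}{Q(x)}$ is the relative entropy (natural logarithm, conventions $0\log(0/a)=0$, $a\log(a/0)=\infty$). *)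

theory Defs
  imports "HOL-Probability.Probability"
begin

definition poisson :: "real \<Rightarrow> nat \<Rightarrow> real" where
  "poisson lam k = exp (- lam) * lam ^ k / fact k"

text \<open>For probability mass
  functions the negative parts of the terms are always summable, so a
  non-(absolutely)-summable series diverges to +infinity.\<close>
definition rel_entropy :: "(nat \<Rightarrow> real) \<Rightarrow> (nat \<Rightarrow> real) \<Rightarrow> ereal" where
  "rel_entropy P Q =
     (if \<exists>x. P x > 0 \<and> Q x = 0 then \<infinity>
      else if (\<lambda>x. P x * ln (P x / Q x)) summable_on UNIV
           then ereal (\<Sum>\<^sub>\<infinity>x. P x * ln (P x / Q x))
           else \<infinity>)"

definition sfi_term :: "(nat \<Rightarrow> real) \<Rightarrow> real \<Rightarrow> nat \<Rightarrow> ennreal" where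
  "sfi_term P lam x =
     (let c = ((real x + 1) * P (x + 1) / lam - P x)\<^sup>2 in
      if P x = 0 then (if c = 0 then 0 else \<infinity>) else ennreal (c / P x))"

definition scaled_fisher :: "(nat \<Rightarrow> real) \<Rightarrow> real \<Rightarrow> ennreal" where
  "scaled_fisher P lam = ennreal lam * (\<Sum>x. sfi_term P lam x)"

end

theory Submission
  imports Defs
begin

(* With f = P / Po(lam) one has D(P || Po(lam)) = Ent_Po(f) and K(X) = lam * E_Po[(f(k+1) - f(k))^2 / f(k)],
   so the claim is the modified log-Sobolev inequality of Bobkov and Ledoux for the Poisson law.
   For Bin(n, p) it holds with constant n p / (1 - p): Bin(n+1, p) is the mixture (1-p) Bin(n, p) +
   p (Bin(n, p) shifted by one), so the inequality tensorizes from a two-point inequality together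
   with Cauchy-Schwarz.  Letting n -> oo with p = lam / n gives the Poisson case for finitely supported
   f; for general P, apply it to the truncations of f and let the truncation level tend to infinity. *)

section \<open>Modified log-Sobolev inequality for binomial laws\<close>

definition binomial_weight :: "real \<Rightarrow> nat \<Rightarrow> nat \<Rightarrow> real" where
  "binomial_weight p n k = real (n choose k) * p ^ k * (1 - p) ^ (n - k)"

definition binomial_expectation :: "real \<Rightarrow> nat \<Rightarrow> (nat \<Rightarrow> real) \<Rightarrow> real" where
  "binomial_expectation p n h = (\<Sum>k\<le>n. binomial_weight p n k * h k)"

lemma binomial_weight_nonneg: "0 \<le> p \<Longrightarrow> p \<le> 1 \<Longrightarrow> 0 \<le> binomial_weight p n k"
  by (simp add: binomial_weight_def)

lemma binomial_weight_pos: "0 < p \<Longrightarrow> p < 1 \<Longrightarrow> k \<le> n \<Longrightarrow> 0 < binomial_weight p n k"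
  by (simp add: binomial_weight_def)

lemma binomial_weight_eq_0: "n < k \<Longrightarrow> binomial_weight p n k = 0"
  by (simp add: binomial_weight_def)

lemma binomial_weight_Suc_0: "binomial_weight p (Suc n) 0 = (1 - p) * binomial_weight p n 0"
  by (simp add: binomial_weight_def)

lemma binomial_weight_Suc_Suc:
  "binomial_weight p (Suc n) (Suc k) = (1 - p) * binomial_weight p n (Suc k) + p * binomial_weight p n k"
proof (cases "k < n")
  case True
  then have "Suc n - Suc k = Suc (n - Suc k)" "n - k = Suc (n - Suc k)" by auto
  then show ?thesis unfolding binomial_weight_def by (simp add: algebra_simps)
next
  case False
  then consider "k = n" | "n < k" by linarith
  then show ?thesis by cases (simp_all add: binomial_weight_def binomial_eq_0)
qed

lemma binomial_expectation_Suc: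
  "binomial_expectation p (Suc n) h
     = (1 - p) * binomial_expectation p n h + p * binomial_expectation p n (\<lambda>k. h (Suc k))"
proof -
  let ?B = "binomial_weight p"
  have "binomial_expectation p (Suc n) h = ?B (Suc n) 0 * h 0 + (\<Sum>k\<le>n. ?B (Suc n) (Suc k) * h (Suc k))"
    unfolding binomial_expectation_def by (rule sum.atMost_Suc_shift)
  also have "(\<Sum>k\<le>n. ?B (Suc n) (Suc k) * h (Suc k))
      = (\<Sum>k\<le>n. (1 - p) * (?B n (Suc k) * h (Suc k)) + p * (?B n k * h (Suc k)))"
    by (intro sum.cong) (auto simp: binomial_weight_Suc_Suc algebra_simps)
  also have "\<dots> = (1 - p) * (\<Sum>k\<le>n. ?B n (Suc k) * h (Suc k)) + p * (\<Sum>k\<le>n. ?B n k * h (Suc k))"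
    by (simp add: sum.distrib sum_distrib_left)
  also have "?B (Suc n) 0 * h 0 + \<dots> = (1 - p) * (?B n 0 * h 0 + (\<Sum>k\<le>n. ?B n (Suc k) * h (Suc k)))
                  + p * (\<Sum>k\<le>n. ?B n k * h (Suc k))"
    by (simp add: binomial_weight_Suc_0 algebra_simps)
  also have "?B n 0 * h 0 + (\<Sum>k\<le>n. ?B n (Suc k) * h (Suc k)) = (\<Sum>k\<le>Suc n. ?B n k * h k)"
    by (rule sum.atMost_Suc_shift[symmetric])
  also have "\<dots> = binomial_expectation p n h"
    by (simp add: binomial_expectation_def binomial_weight_eq_0)
  finally show ?thesis by (simp add: binomial_expectation_def)
qed

lemma binomial_expectation_nonneg:
  "0 \<le> p \<Longrightarrow> p \<le> 1 \<Longrightarrow> (\<And>k. 0 \<le> h k) \<Longrightarrow> 0 \<le> binomial_expectation p n h"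
  unfolding binomial_expectation_def by (intro sum_nonneg mult_nonneg_nonneg binomial_weight_nonneg)

lemma binomial_expectation_eq_0_imp:
  assumes "0 < p" "p < 1" "\<And>k. 0 \<le> h k" "binomial_expectation p n h = 0" "k \<le> n"
  shows "h k = 0"
proof -
  have "\<forall>i\<in>{..n}. binomial_weight p n i * h i = 0"
    using assms(4) unfolding binomial_expectation_def
    by (subst (asm) sum_nonneg_eq_0_iff) (use assms binomial_weight_nonneg in auto)
  then have "binomial_weight p n k * h k = 0" using assms(5) by simp
  then show ?thesis using binomial_weight_pos[OF assms(1,2,5)] by simp
qed

lemma two_point_entropy_le:
  fixes p a b :: real
  assumes p: "0 \<le> p" "p < 1" and ab: "0 \<le> a" "0 \<le> b" "a = 0 \<longrightarrow> b = 0"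
  shows "(1 - p) * (a * ln a) + p * (b * ln b) - ((1 - p) * a + p * b) * ln ((1 - p) * a + p * b)
           \<le> p * (b - a)\<^sup>2 / a"
proof (cases "a = 0")
  case True
  then show ?thesis using ab by simp
next
  case False
  then have a: "a > 0" using ab by auto
  define m where "m = (1 - p) * a + p * b"
  have "(1 - p) * a > 0" "p * b \<ge> 0" using a p ab by simp_all
  then have m: "m > 0" unfolding m_def by linarith
  have "m * ln (a / m) \<le> m * (a / m - 1)"
    using a m by (intro mult_left_mono ln_le_minus_one) auto
  also have "\<dots> = a - m" using m by (simp add: field_simps)
  finally have bound_a: "m * ln (a / m) \<le> a - m" .
  have bound_b: "b * ln (b / a) \<le> b * (b - a) / a"
  proof (cases "b = 0")
    case False
    then have "b * ln (b / a) \<le> b * (b / a - 1)"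
      using a ab by (intro mult_left_mono ln_le_minus_one) auto
    then show ?thesis using a by (simp add: field_simps)
  qed simp
  \<comment> \<open>split the entropy defect at the mean \<open>m\<close> and at \<open>a\<close>, then use \<open>ln x \<le> x - 1\<close> twice\<close>
  have "(1 - p) * (a * ln a) + p * (b * ln b) - m * ln m = m * ln (a / m) + p * (b * ln (b / a))"
    using a m ab by (cases "b = 0") (auto simp: m_def ln_div algebra_simps)
  also have "\<dots> \<le> (a - m) + p * (b * (b - a) / a)"
    using bound_a bound_b p by (intro add_mono mult_left_mono) auto
  also have "\<dots> = p * (b - a)\<^sup>2 / a" using a by (simp add: m_def field_simps power2_eq_square)
  finally show ?thesis by (simp add: m_def)
qed

lemma sum_square_div_sum_le:
  fixes w a x :: "'i \<Rightarrow> real"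
  assumes "finite A" "\<And>i. i \<in> A \<Longrightarrow> 0 \<le> w i" "\<And>i. i \<in> A \<Longrightarrow> 0 \<le> a i"
    "\<And>i. i \<in> A \<Longrightarrow> a i = 0 \<Longrightarrow> x i = 0"
  shows "(\<Sum>i\<in>A. w i * x i)\<^sup>2 / (\<Sum>i\<in>A. w i * a i) \<le> (\<Sum>i\<in>A. w i * ((x i)\<^sup>2 / a i))"
proof -
  define W where "W = (\<Sum>i\<in>A. w i * a i)"
  define X where "X = (\<Sum>i\<in>A. w i * x i)"
  define R where "R = (\<Sum>i\<in>A. w i * ((x i)\<^sup>2 / a i))"
  have "0 \<le> R" unfolding R_def using assms by (intro sum_nonneg) auto
  have "0 \<le> W" unfolding W_def using assms by (intro sum_nonneg) auto
  show ?thesis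
  proof (cases "W = 0")
    case True
    then show ?thesis using \<open>0 \<le> R\<close> unfolding X_def W_def R_def by simp
  next
    case False
    with \<open>0 \<le> W\<close> have "W > 0" by simp
    define t where "t = X / W"
    \<comment> \<open>expand \<open>0 \<le> \<Sum> w (x - t a)\<^sup>2 / a\<close> at the optimal \<open>t\<close>\<close>
    have expand: "w i * ((x i - t * a i)\<^sup>2 / a i)
        = w i * ((x i)\<^sup>2 / a i) - 2 * t * (w i * x i) + t\<^sup>2 * (w i * a i)" if "i \<in> A" for i
      using assms(4)[OF that] by (cases "a i = 0") (auto simp: field_simps power2_eq_square)
    have "0 \<le> (\<Sum>i\<in>A. w i * ((x i - t * a i)\<^sup>2 / a i))"
      using assms by (intro sum_nonneg mult_nonneg_nonneg divide_nonneg_nonneg) auto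
    also have "\<dots> = (\<Sum>i\<in>A. w i * ((x i)\<^sup>2 / a i) - 2 * t * (w i * x i) + t\<^sup>2 * (w i * a i))"
      by (intro sum.cong refl expand)
    also have "\<dots> = R - 2 * t * X + t\<^sup>2 * W"
      by (simp add: sum.distrib sum_subtractf sum_distrib_left R_def X_def W_def)
    also have "\<dots> = R - X\<^sup>2 / W" using \<open>W > 0\<close> by (simp add: t_def field_simps power2_eq_square)
    finally show ?thesis unfolding X_def W_def R_def by simp
  qed
qed

lemma binomial_expectation_shift_eq_0:
  assumes p: "0 < p" "p < 1" and f: "\<And>k. 0 \<le> f k" "\<And>k. f k = 0 \<Longrightarrow> f (Suc k) = 0"
    and "binomial_expectation p n f = 0"
  shows "binomial_expectation p n (\<lambda>k. f (Suc k)) = 0"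
  using binomial_expectation_eq_0_imp[OF p f(1) assms(5)] f(2)
  by (simp add: binomial_expectation_def)

lemma binomial_expectation_shift_diff_le:
  assumes p: "0 \<le> p" "p \<le> 1" and f: "\<And>k. 0 \<le> f k" "\<And>k. f k = 0 \<Longrightarrow> f (Suc k) = 0"
  shows "(binomial_expectation p n (\<lambda>k. f (Suc k)) - binomial_expectation p n f)\<^sup>2
           / binomial_expectation p n f
         \<le> binomial_expectation p n (\<lambda>k. (f (Suc k) - f k)\<^sup>2 / f k)"
proof -
  have "binomial_expectation p n (\<lambda>k. f (Suc k)) - binomial_expectation p n f
      = (\<Sum>k\<le>n. binomial_weight p n k * (f (Suc k) - f k))"
    by (simp add: binomial_expectation_def sum_subtractf algebra_simps)
  moreover have "(\<Sum>k\<le>n. binomial_weight p n k * (f (Suc k) - f k))\<^sup>2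
        / (\<Sum>k\<le>n. binomial_weight p n k * f k)
      \<le> (\<Sum>k\<le>n. binomial_weight p n k * ((f (Suc k) - f k)\<^sup>2 / f k))"
    by (rule sum_square_div_sum_le) (use p f binomial_weight_nonneg in auto)
  ultimately show ?thesis by (simp add: binomial_expectation_def)
qed

lemma binomial_log_sobolev:
  assumes p: "0 < p" "p < 1" and f: "\<And>k. 0 \<le> f k" "\<And>k. f k = 0 \<Longrightarrow> f (Suc k) = 0"
  shows "binomial_expectation p n (\<lambda>k. f k * ln (f k))
           - binomial_expectation p n f * ln (binomial_expectation p n f)
         \<le> (real n * p / (1 - p)) * binomial_expectation p n (\<lambda>k. (f (Suc k) - f k)\<^sup>2 / f k)"
  using f
proof (induction n arbitrary: f)
  case 0
  then show ?case by (simp add: binomial_expectation_def binomial_weight_def)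
next
  case (Suc n f)
  let ?E = "binomial_expectation p n"
  define fS where "fS = (\<lambda>k. f (Suc k))"
  define ent where "ent h = ?E (\<lambda>k. h k * ln (h k)) - ?E h * ln (?E h)" for h
  define dir where "dir h = ?E (\<lambda>k. (h (Suc k) - h k)\<^sup>2 / h k)" for h
  define c where "c = real n * p / (1 - p)"
  let ?defect = "(1 - p) * (?E f * ln (?E f)) + p * (?E fS * ln (?E fS))
       - ((1 - p) * ?E f + p * ?E fS) * ln ((1 - p) * ?E f + p * ?E fS)"
  have fS: "0 \<le> fS k" "fS k = 0 \<Longrightarrow> fS (Suc k) = 0" for k using Suc.prems by (auto simp: fS_def)
  have ent_f: "ent f \<le> c * dir f" using Suc.IH[of f] Suc.prems by (simp add: ent_def dir_def c_def)
  have ent_fS: "ent fS \<le> c * dir fS" using Suc.IH[of fS] fS by (simp add: ent_def dir_def c_def)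
  have "0 \<le> ?E f" "0 \<le> ?E fS" using p Suc.prems fS by (auto intro!: binomial_expectation_nonneg)
  moreover have "?E f = 0 \<longrightarrow> ?E fS = 0"
    using binomial_expectation_shift_eq_0[OF p, of f n] Suc.prems by (simp add: fS_def)
  ultimately have "?defect \<le> p * (?E fS - ?E f)\<^sup>2 / ?E f"
    using p by (intro two_point_entropy_le) auto
  also have "\<dots> \<le> p * dir f"
    unfolding times_divide_eq_right[symmetric] dir_def fS_def
    using binomial_expectation_shift_diff_le[of p f n] p Suc.prems by (intro mult_left_mono) auto
  finally have two_point: "?defect \<le> p * dir f" .
  have "0 \<le> dir fS" unfolding dir_def using p fS by (auto intro!: binomial_expectation_nonneg)
  have "binomial_expectation p (Suc n) (\<lambda>k. f k * ln (f k))
      - binomial_expectation p (Suc n) f * ln (binomial_expectation p (Suc n) f)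
      = (1 - p) * ent f + p * ent fS + ?defect"
    by (simp add: binomial_expectation_Suc ent_def fS_def algebra_simps)
  also have "\<dots> \<le> (1 - p) * (c * dir f) + p * (c * dir fS) + p * dir f"
    using ent_f ent_fS two_point p by (intro add_mono mult_left_mono) auto
  also have "\<dots> \<le> (c + p / (1 - p)) * ((1 - p) * dir f + p * dir fS)"
    using p \<open>0 \<le> dir fS\<close> by (simp add: field_simps)
  also have "\<dots> = (real (Suc n) * p / (1 - p))
      * binomial_expectation p (Suc n) (\<lambda>k. (f (Suc k) - f k)\<^sup>2 / f k)"
    by (simp add: binomial_expectation_Suc dir_def fS_def c_def add_divide_distrib algebra_simps)
  finally show ?case .
qed

section \<open>Poisson limit\<close>

lemma binomial_div_power_tendsto: "(\<lambda>n. real (n choose k) / real n ^ k) \<longlonglongrightarrow> 1 / fact k"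
proof (induction k)
  case 0
  show ?case by simp
next
  case (Suc k)
  have eq: "real (n choose Suc k) / real n ^ Suc k
      = (real (n choose k) / real n ^ k) * ((1 - real k / real n) / real (Suc k))" if "n > k" for n
  proof -
    have "Suc k * (n choose Suc k) = (n - k) * (n choose k)"
      by (metis binomial_absorb_comp binomial_absorption)
    then have "real (Suc k) * real (n choose Suc k) = (real n - real k) * real (n choose k)"
      using that by (metis of_nat_diff of_nat_mult less_imp_le)
    then show ?thesis using that by (simp add: field_simps del: of_nat_Suc)
  qed
  have "(\<lambda>n. (real (n choose k) / real n ^ k) * ((1 - real k / real n) / real (Suc k)))
      \<longlonglongrightarrow> 1 / fact k * ((1 - 0) / real (Suc k))"
    by (intro tendsto_intros Suc.IH) simp
  moreover have "eventually (\<lambda>n. (real (n choose k) / real n ^ k) * ((1 - real k / real n) / real (Suc k))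
      = real (n choose Suc k) / real n ^ Suc k) sequentially"
    using eventually_gt_at_top[of k] by eventually_elim (rule eq[symmetric])
  ultimately have "(\<lambda>n. real (n choose Suc k) / real n ^ Suc k) \<longlonglongrightarrow> 1 / fact k * (1 / real (Suc k))"
    using tendsto_cong by force
  then show ?case by (simp add: field_simps)
qed

lemma binomial_weight_tendsto_poisson:
  assumes "\<mu> > 0"
  shows "(\<lambda>n. binomial_weight (\<mu> / real n) n k) \<longlonglongrightarrow> poisson \<mu> k"
proof -
  have "eventually (\<lambda>n. (real (n choose k) / real n ^ k) * \<mu> ^ k
      * ((1 + (- \<mu>) / real n) ^ n / (1 - \<mu> / real n) ^ k) = binomial_weight (\<mu> / real n) n k) sequentially"
    using eventually_ge_at_top[of "k + nat \<lceil>\<mu>\<rceil> + 1"]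
  proof eventually_elim
    case (elim n)
    then have "real n > \<mu>" by linarith
    then have "1 - \<mu> / real n \<noteq> 0" "real n > 0" using assms by (auto simp: field_simps)
    moreover have "k \<le> n" using elim by simp
    ultimately show ?case
      by (simp add: binomial_weight_def power_diff power_divide field_simps)
  qed
  moreover have "(\<lambda>n. (real (n choose k) / real n ^ k) * \<mu> ^ k
      * ((1 + (- \<mu>) / real n) ^ n / (1 - \<mu> / real n) ^ k))
      \<longlonglongrightarrow> (1 / fact k) * \<mu> ^ k * (exp (- \<mu>) / (1 - 0) ^ k)"
    by (intro tendsto_intros binomial_div_power_tendsto tendsto_exp_limit_sequentially) simp
  ultimately have "(\<lambda>n. binomial_weight (\<mu> / real n) n k)
      \<longlonglongrightarrow> (1 / fact k) * \<mu> ^ k * (exp (- \<mu>) / (1 - 0) ^ k)"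
    using tendsto_cong by force
  then show ?thesis by (simp add: poisson_def mult_ac)
qed

lemma poisson_pos: "\<mu> > 0 \<Longrightarrow> poisson \<mu> k > 0"
  by (simp add: poisson_def)

lemma poisson_log_sobolev:
  fixes f :: "nat \<Rightarrow> real"
  assumes \<mu>: "\<mu> > 0" and f: "\<And>k. 0 \<le> f k" "\<And>k. f k = 0 \<Longrightarrow> f (Suc k) = 0"
    and f_support: "\<And>k. k > N \<Longrightarrow> f k = 0" and "f 0 > 0"
  shows "(\<Sum>k\<le>N. poisson \<mu> k * (f k * ln (f k)))
      - (\<Sum>k\<le>N. poisson \<mu> k * f k) * ln (\<Sum>k\<le>N. poisson \<mu> k * f k)
    \<le> \<mu> * (\<Sum>k\<le>N. poisson \<mu> k * ((f (Suc k) - f k)\<^sup>2 / f k))"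
proof -
  let ?B = "\<lambda>n. binomial_weight (\<mu> / real n) n"
  define M where "M = N + nat \<lceil>\<mu>\<rceil> + 1"
  have truncate: "binomial_expectation (\<mu> / real n) n h = (\<Sum>k\<le>N. ?B n k * h k)"
    if "n \<ge> M" "\<And>k. k > N \<Longrightarrow> h k = 0" for n h
    unfolding binomial_expectation_def
    by (rule sum.mono_neutral_right) (use that in \<open>auto simp: M_def\<close>)
  have binomial: "(\<Sum>k\<le>N. ?B n k * (f k * ln (f k)))
      - (\<Sum>k\<le>N. ?B n k * f k) * ln (\<Sum>k\<le>N. ?B n k * f k)
    \<le> (\<mu> / (1 - \<mu> / real n)) * (\<Sum>k\<le>N. ?B n k * ((f (Suc k) - f k)\<^sup>2 / f k))"
    if "n \<ge> M" for n
  proof -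
    have "real n > \<mu>" using that unfolding M_def by linarith
    then have "0 < \<mu> / real n" "\<mu> / real n < 1" "real n * (\<mu> / real n) = \<mu>"
      using \<mu> by (auto simp: field_simps)
    with binomial_log_sobolev[of "\<mu> / real n" f n] f show ?thesis
      by (simp add: truncate[OF that] f_support)
  qed
  define m where "m = (\<Sum>k\<le>N. poisson \<mu> k * f k)"
  have "0 \<le> poisson \<mu> k * f k" for k using f poisson_pos[OF \<mu>, of k] by simp
  then have "poisson \<mu> 0 * f 0 \<le> m" unfolding m_def by (intro member_le_sum) auto
  moreover have "poisson \<mu> 0 * f 0 > 0" using \<open>f 0 > 0\<close> poisson_pos[OF \<mu>, of 0] by simp
  ultimately have "m > 0" by linarith
  have "(\<lambda>n. (\<Sum>k\<le>N. ?B n k * (f k * ln (f k)))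
      - (\<Sum>k\<le>N. ?B n k * f k) * ln (\<Sum>k\<le>N. ?B n k * f k))
     \<longlonglongrightarrow> (\<Sum>k\<le>N. poisson \<mu> k * (f k * ln (f k))) - m * ln m"
    using \<open>m > 0\<close> unfolding m_def by (intro tendsto_intros binomial_weight_tendsto_poisson[OF \<mu>]) auto
  moreover have "(\<lambda>n. (\<mu> / (1 - \<mu> / real n)) * (\<Sum>k\<le>N. ?B n k * ((f (Suc k) - f k)\<^sup>2 / f k)))
     \<longlonglongrightarrow> (\<mu> / (1 - 0)) * (\<Sum>k\<le>N. poisson \<mu> k * ((f (Suc k) - f k)\<^sup>2 / f k))"
    by (intro tendsto_intros binomial_weight_tendsto_poisson[OF \<mu>]) auto
  ultimately have "(\<Sum>k\<le>N. poisson \<mu> k * (f k * ln (f k))) - m * ln m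
      \<le> (\<mu> / (1 - 0)) * (\<Sum>k\<le>N. poisson \<mu> k * ((f (Suc k) - f k)\<^sup>2 / f k))"
    by (rule LIMSEQ_le) (use binomial in blast)
  then show ?thesis unfolding m_def by simp
qed

lemma poisson_dirichlet_term_eq:
  assumes "lam > 0" "q0 = 0 \<Longrightarrow> q1 = 0"
  shows "poisson lam k * ((q1 / poisson lam (Suc k) - q0 / poisson lam k)\<^sup>2 / (q0 / poisson lam k))
       = ((real k + 1) * q1 / lam - q0)\<^sup>2 / q0"
proof (cases "q0 = 0")
  case False
  define p where "p = poisson lam k"
  have "p > 0" unfolding p_def using poisson_pos[OF \<open>lam > 0\<close>] .
  have Suc: "poisson lam (Suc k) = p * lam / (real k + 1)"
    unfolding p_def poisson_def by (simp add: field_simps)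
  have "q1 / poisson lam (Suc k) - q0 / p = ((real k + 1) * q1 / lam - q0) / p"
    unfolding Suc using \<open>p > 0\<close> \<open>lam > 0\<close> by (simp add: field_simps)
  then show ?thesis
    using \<open>p > 0\<close> False by (simp add: p_def[symmetric] power_divide field_simps power2_eq_square)
qed (use assms in simp)

section \<open>Truncation argument\<close>

lemma mult_ln_div_ge:
  fixes p q :: real
  assumes "0 \<le> p" "0 < q"
  shows "p - q \<le> p * ln (p / q)"
proof (cases "p = 0")
  case False
  then have "p > 0" using assms by simp
  have "p * (- ln (p / q)) = p * ln (q / p)" using \<open>p > 0\<close> assms by (simp add: ln_div)
  also have "\<dots> \<le> p * (q / p - 1)"
    using \<open>p > 0\<close> assms by (intro mult_left_mono ln_le_minus_one) auto
  also have "\<dots> = q - p" using \<open>p > 0\<close> by (simp add: field_simps)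
  finally show ?thesis by simp
qed (use assms in simp)

lemma pmf_sums_1: "pmf P sums 1" for P :: "nat pmf"
proof -
  have "infsum (pmf P) UNIV = 1"
    using infsetsum_infsum[OF pmf_abs_summable, of P UNIV] infsetsum_pmf_eq_1[of P UNIV] by simp
  moreover from this have "pmf P summable_on UNIV" using infsum_not_exists by fastforce
  ultimately show ?thesis using has_sum_imp_sums has_sum_infsum by metis
qed

lemma pmf_partial_sums:
  fixes P :: "nat pmf"
  shows "(\<lambda>N. \<Sum>k\<le>N. pmf P k) \<longlonglongrightarrow> 1" and "(\<Sum>k\<le>N. pmf P k) \<le> 1"
proof -
  show "(\<lambda>N. \<Sum>k\<le>N. pmf P k) \<longlonglongrightarrow> 1"
    using pmf_sums_1[of P] unfolding sums_def lessThan_Suc_atMost[symmetric] by (rule LIMSEQ_Suc)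
  show "(\<Sum>k\<le>N. pmf P k) \<le> 1"
    using sum_le_suminf[OF sums_summable[OF pmf_sums_1], of "{..N}" P] sums_unique[OF pmf_sums_1]
    by simp
qed

lemma summable_poisson:
  assumes "lam > 0"
  shows "summable (poisson lam)"
proof -
  have "poisson lam = pmf (poisson_pmf lam)"
    using assms unfolding fun_eq_iff poisson_def by (simp add: pmf_poisson field_simps)
  then show ?thesis using pmf_sums_1 sums_summable by metis
qed

lemma pmf_0_pos_if_support_downward_closed:
  fixes P :: "nat pmf"
  assumes "\<And>k. pmf P k = 0 \<Longrightarrow> pmf P (Suc k) = 0"
  shows "pmf P 0 > 0"
proof (rule ccontr)
  assume "\<not> pmf P 0 > 0"
  then have "pmf P k = 0" for k
    using pmf_nonneg[of P 0] assms by (induction k) auto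
  then have "set_pmf P = {}" by (auto simp: set_pmf_eq)
  then show False using set_pmf_not_empty by blast
qed

text \<open>For \<open>P k = 0\<close> the quotient is \<open>0\<close> (division by zero), which agrees with \<^const>\<open>sfi_term\<close>
  as long as also \<open>P (k + 1) = 0\<close>.\<close>

definition fisher_term :: "(nat \<Rightarrow> real) \<Rightarrow> real \<Rightarrow> nat \<Rightarrow> real" where
  "fisher_term P lam k = ((real k + 1) * P (k + 1) / lam - P k)\<^sup>2 / P k"

lemma fisher_term_nonneg: "0 \<le> P k \<Longrightarrow> 0 \<le> fisher_term P lam k"
  by (simp add: fisher_term_def)

lemma sfi_term_eq_top:
  assumes "lam > 0" "P x = 0" "P (Suc x) > 0"
  shows "sfi_term P lam x = \<infinity>"
  using assms by (simp add: sfi_term_def)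

lemma scaled_fisher_eq_top:
  assumes "lam > 0" "P x = 0" "P (Suc x) > 0"
  shows "scaled_fisher P lam = \<infinity>"
proof -
  have "(\<Sum>k. sfi_term P lam k) = \<infinity>"
    using ennreal_suminf_lessD[of "sfi_term P lam" \<infinity> x] sfi_term_eq_top[OF assms] less_top by auto
  then show ?thesis using \<open>lam > 0\<close> by (simp add: scaled_fisher_def ennreal_mult_top)
qed

lemma scaled_fisher_eq:
  assumes "lam > 0" "\<And>k. 0 \<le> P k" "\<And>k. P k = 0 \<Longrightarrow> P (Suc k) = 0"
  shows "scaled_fisher P lam
    = (if summable (fisher_term P lam) then ennreal (lam * suminf (fisher_term P lam)) else \<infinity>)"
proof -
  have nonneg: "0 \<le> fisher_term P lam k" for k
    using assms(2) by (rule fisher_term_nonneg)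
  have "sfi_term P lam k = ennreal (fisher_term P lam k)" for k
    using assms(3)[of k] by (auto simp: sfi_term_def fisher_term_def Let_def)
  then have sum: "(\<Sum>k. sfi_term P lam k) = (\<Sum>k. ennreal (fisher_term P lam k))" by simp
  show ?thesis
  proof (cases "summable (fisher_term P lam)")
    case True
    have "(\<Sum>k. sfi_term P lam k) = ennreal (suminf (fisher_term P lam))"
      unfolding sum by (rule suminf_ennreal2[OF nonneg True])
    moreover have "0 \<le> suminf (fisher_term P lam)" by (rule suminf_nonneg[OF True nonneg])
    ultimately have "scaled_fisher P lam = ennreal (lam * suminf (fisher_term P lam))"
      unfolding scaled_fisher_def using \<open>lam > 0\<close> by (simp only: ennreal_mult less_imp_le)
    then show ?thesis using True by (simp only: if_True)
  next
    case False
    then have "(\<Sum>k. sfi_term P lam k) = \<infinity>"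
      using summable_suminf_not_top[of "fisher_term P lam", OF nonneg]
      unfolding sum infinity_ennreal_def by blast
    then show ?thesis using False \<open>lam > 0\<close> by (simp add: scaled_fisher_def ennreal_mult_top)
  qed
qed

text \<open>The Poisson log-Sobolev inequality applied to the truncation of \<open>P / Po(lam)\<close> at \<open>N\<close>; the
  boundary term \<open>lam * P N\<close> comes from the jump of the truncated density to \<open>0\<close>.\<close>

lemma entropy_truncation_le:
  fixes P :: "nat \<Rightarrow> real"
  assumes lam: "lam > 0" and P: "\<And>k. 0 \<le> P k" "\<And>k. P k = 0 \<Longrightarrow> P (Suc k) = 0" "P 0 > 0"
  shows "(\<Sum>k\<le>N. P k * ln (P k / poisson lam k)) - (\<Sum>k\<le>N. P k) * ln (\<Sum>k\<le>N. P k)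
    \<le> lam * (\<Sum>k<N. fisher_term P lam k) + lam * P N"
proof -
  have Po: "poisson lam k > 0" for k using poisson_pos[OF lam] .
  define f where "f k = (if k \<le> N then P k else 0) / poisson lam k" for k
  have "0 \<le> f k" "f k = 0 \<Longrightarrow> f (Suc k) = 0" "k > N \<Longrightarrow> f k = 0" for k
    using P(1,2)[of k] Po[of k] by (auto simp: f_def)
  moreover have "f 0 > 0" using P(3) Po[of 0] by (simp add: f_def)
  ultimately have lsi: "(\<Sum>k\<le>N. poisson lam k * (f k * ln (f k)))
      - (\<Sum>k\<le>N. poisson lam k * f k) * ln (\<Sum>k\<le>N. poisson lam k * f k)
    \<le> lam * (\<Sum>k\<le>N. poisson lam k * ((f (Suc k) - f k)\<^sup>2 / f k))"
    by (intro poisson_log_sobolev lam) auto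
  have "(\<Sum>k\<le>N. poisson lam k * (f k * ln (f k))) = (\<Sum>k\<le>N. P k * ln (P k / poisson lam k))"
    "(\<Sum>k\<le>N. poisson lam k * f k) = (\<Sum>k\<le>N. P k)"
    using Po by (auto intro!: sum.cong simp: f_def less_imp_neq[symmetric])
  moreover have "(\<Sum>k<N. poisson lam k * ((f (Suc k) - f k)\<^sup>2 / f k)) = (\<Sum>k<N. fisher_term P lam k)"
  proof (rule sum.cong)
    fix k assume "k \<in> {..<N}"
    then have "f k = P k / poisson lam k" "f (Suc k) = P (Suc k) / poisson lam (Suc k)"
      by (simp_all add: f_def)
    then show "poisson lam k * ((f (Suc k) - f k)\<^sup>2 / f k) = fisher_term P lam k"
      using poisson_dirichlet_term_eq[OF lam, of "P k" "P (Suc k)" k] P(2)[of k]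
      by (simp add: fisher_term_def)
  qed simp
  moreover have "poisson lam N * ((f (Suc N) - f N)\<^sup>2 / f N) = P N"
    using Po[of N] by (cases "P N = 0") (auto simp: f_def power2_eq_square)
  ultimately show ?thesis
    using lsi by (simp add: lessThan_Suc_atMost[symmetric] distrib_left)
qed

lemma rel_entropy_eq_suminf:
  fixes P Q :: "nat \<Rightarrow> real"
  assumes P: "\<And>k. 0 \<le> P k" and Q: "\<And>k. Q k > 0" "summable Q"
    and bounded: "\<And>N. (\<Sum>k\<le>N. P k * ln (P k / Q k)) \<le> C"
  shows "summable (\<lambda>k. P k * ln (P k / Q k))"
    and "rel_entropy P Q = ereal (\<Sum>k. P k * ln (P k / Q k))"
proof -
  define a where "a k = P k * ln (P k / Q k)" for k
  \<comment> \<open>\<open>a + Q\<close> is nonnegative with bounded partial sums, which controls \<open>\<bar>a\<bar> \<le> (a + Q) + Q\<close>\<close>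
  have aQ: "0 \<le> a k + Q k" for k
    using mult_ln_div_ge[OF P Q(1), of k k] P[of k] unfolding a_def by linarith
  have "(\<Sum>k\<le>N. a k + Q k) \<le> C + suminf Q" for N
    using bounded[of N] sum_le_suminf[OF Q(2), of "{..N}"] Q(1)
    by (simp add: a_def sum.distrib less_imp_le)
  then have "summable (\<lambda>k. a k + Q k)" by (rule bounded_imp_summable[OF aQ])
  then have "summable (\<lambda>k. (a k + Q k) + Q k)" using Q(2) by (rule summable_add)
  moreover have "norm (norm (a k)) \<le> (a k + Q k) + Q k" for k
    using aQ[of k] Q(1)[of k] by simp
  ultimately have "summable (\<lambda>k. norm (a k))" by (rule summable_comparison_test')
  then have "(a has_sum suminf a) UNIV" "summable a"
    using norm_summable_imp_has_sum summable_norm_cancel summable_sums by blast+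
  then show "summable (\<lambda>k. P k * ln (P k / Q k))"
    and "rel_entropy P Q = ereal (\<Sum>k. P k * ln (P k / Q k))"
    using Q(1) has_sum_imp_summable infsumI
    unfolding a_def[abs_def] rel_entropy_def by (auto simp: less_imp_neq[symmetric])
qed

lemma rel_entropy_poisson_le:
  fixes P :: "nat pmf"
  assumes lam: "lam > 0" and down: "\<And>k. pmf P k = 0 \<Longrightarrow> pmf P (Suc k) = 0"
    and summable: "summable (fisher_term (pmf P) lam)"
  shows "rel_entropy (pmf P) (poisson lam) \<le> ereal (lam * suminf (fisher_term (pmf P) lam))"
proof -
  define a where "a k = pmf P k * ln (pmf P k / poisson lam k)" for k
  define S where "S N = (\<Sum>k\<le>N. pmf P k)" for N
  define T where "T = suminf (fisher_term (pmf P) lam)"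
  have "(\<Sum>k<N. fisher_term (pmf P) lam k) \<le> T" for N
    unfolding T_def by (intro sum_le_suminf summable fisher_term_nonneg) auto
  then have Fisher_le: "lam * (\<Sum>k<N. fisher_term (pmf P) lam k) \<le> lam * T" for N
    using lam by (intro mult_left_mono) auto
  have truncation: "(\<Sum>k\<le>N. a k) - S N * ln (S N)
      \<le> lam * (\<Sum>k<N. fisher_term (pmf P) lam k) + lam * pmf P N" for N
    unfolding a_def S_def
    by (rule entropy_truncation_le[OF lam]) (use down pmf_0_pos_if_support_downward_closed in auto)
  have partial_sum_le: "(\<Sum>k\<le>N. a k) \<le> lam * T + lam * pmf P N + S N * ln (S N)" for N
    using truncation[of N] Fisher_le[of N] by linarith
  have "S N \<le> 1" for N
    unfolding S_def by (rule pmf_partial_sums)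
  moreover have "S N > 0" for N
    using member_le_sum[of 0 "{..N}" "pmf P"] pmf_0_pos_if_support_downward_closed[OF down]
    by (simp add: S_def)
  ultimately have "S N * ln (S N) \<le> 0" for N
    by (meson less_imp_le ln_le_zero_iff mult_nonneg_nonpos)
  moreover have "lam * pmf P N \<le> lam" for N
    using pmf_le_1[of P N] lam by (simp add: mult_left_le)
  ultimately have "(\<Sum>k\<le>N. a k) \<le> lam * T + lam" for N
    using partial_sum_le by (smt (verit))
  then have "summable a" and RE: "rel_entropy (pmf P) (poisson lam) = ereal (suminf a)"
    using rel_entropy_eq_suminf[of "pmf P" "poisson lam"] poisson_pos[OF lam] summable_poisson[OF lam]
    unfolding a_def[abs_def] by auto
  have "(\<lambda>N. \<Sum>k\<le>N. a k) \<longlonglongrightarrow> suminf a"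
    by (rule summable_LIMSEQ'[OF \<open>summable a\<close>])
  moreover have "(\<lambda>N. lam * T + lam * pmf P N + S N * ln (S N)) \<longlonglongrightarrow> lam * T + lam * 0 + 1 * ln 1"
    unfolding S_def
    by (intro tendsto_intros pmf_partial_sums summable_LIMSEQ_zero[OF sums_summable[OF pmf_sums_1]]) simp
  ultimately have "suminf a \<le> lam * T + lam * 0 + 1 * ln 1"
    using partial_sum_le by (intro LIMSEQ_le) auto
  then show ?thesis unfolding RE T_def by simp
qed

theorem proposition2:
  fixes P :: "nat pmf" and lam :: real
  assumes "integrable (measure_pmf P) real"
    and "lam = measure_pmf.expectation P real"
    and "lam > 0"
    and "(\<forall>k. pmf P k > 0) \<or> (\<exists>N. \<forall>k>N. pmf P k = 0)"
  shows "rel_entropy (pmf P) (poisson lam) \<le> enn2ereal (scaled_fisher (pmf P) lam)"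
proof (cases "\<exists>x. pmf P x = 0 \<and> pmf P (Suc x) > 0")
  case True
  then show ?thesis using scaled_fisher_eq_top[OF \<open>lam > 0\<close>] by auto
next
  case False
  then have down: "pmf P k = 0 \<Longrightarrow> pmf P (Suc k) = 0" for k
    using pmf_nonneg[of P "Suc k"] by (auto simp: le_less)
  show ?thesis
  proof (cases "summable (fisher_term (pmf P) lam)")
    case True
    then show ?thesis
      using rel_entropy_poisson_le[OF \<open>lam > 0\<close> down True] scaled_fisher_eq[of lam "pmf P"]
        \<open>lam > 0\<close> down suminf_nonneg[OF True fisher_term_nonneg[OF pmf_nonneg]]
      by simp
  next
    case False
    then show ?thesis using scaled_fisher_eq[of lam "pmf P"] \<open>lam > 0\<close> down by simp
  qed
qed

end
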